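(* Let $(P,A,\lambda)$ be a marked poset with $A$ linearly ordered, let $(U_1,U_2)$ be an admissible decomposition, and let $\lambda,\mu:A\to\mathbb{Z}_{\ge0}$ be two markings of $A$. Then $S_{U_1,U_2}(\lambda)+S_{U_1,U_2}(\mu)=S_{U_1,U_2}(\lambda+\mu)$ (Minkowski sum).
   Context: A marked poset is a triple $(P,A,\lambda)$ where $(P,\prec)$ is a finite poset, $A\subseteq P$ contains all minimal and all maximal elements of $P$, and $\lambda:A\to\mathbb{Z}_{\ge 0}$, $a\mapsto\lambda_a$. A decomposition of $(P,A,\lambda)$ is a pair $(U_1,U_2)$ of disjoint sets with $U_1\cup U_2=P\setminus A$; it is admissible if there are no $u_1\in U_1$, $u_2\in U_2$ with $u_1\prec u_2$. Put $A_1=A\cup U_1$. For a marking $\lambda$, the marked chain-order polytope $\mathcal{CO}_{U_1,U_2}(\lambda)\subset\mathbb{R}^{P\setminus A}$ is the set of $(x_p)_{p\in P\setminus A}$ such that: (i) $x_p\le\lambda_a$ whenever $p\in U_1$, $a\in A$, $p\prec a$; (ii) $\lambda_b\le x_q$ whenever $q\in U_1$, $b\in A$, $b\prec q$; (iii) $x_p\le x_q$ whenever $p,q\in U_1$, $p\prec q$; (iv) $x_p\ge0$ for $p\in U_2$; (v) for every chain $b\prec p_n\prec\cdots\prec p_1\prec a$ with $n\ge1$, $a,b\in A_1$, $p_i\in U_2$: $x_{p_1}+\cdots+x_{p_n}\le\lambda_a-\lambda_b$, where $\lambda_q$ means $x_q$ for $q\in U_1$; (vi) for every chain $p_1\prec\cdots\prec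 p_s\prec q$ with $q\in U_1$, $p_i\in U_2$: $x_{p_1}+\cdots+x_{p_s}\le x_q$. Set $S_{U_1,U_2}(\lambda)=\mathcal{CO}_{U_1,U_2}(\lambda)\cap\mathbb{Z}_{\ge0}^{P\setminus A}$.
   Formalization: The markings $\lambda$ and $\mu$ are also order-preserving on A: $\lambda_a\le\lambda_b$ and $\mu_a\le\mu_b$ whenever $a\prec b$ in A. The statement above fails without it. *)

theory Defs
  imports Complex_Main
begin

definition strict_poset :: "'a set \<Rightarrow> ('a \<Rightarrow> 'a \<Rightarrow> bool) \<Rightarrow> bool" where
  "strict_poset P lt \<longleftrightarrow> finite P
     \<and> (\<forall>p\<in>P. \<not> lt p p)
     \<and> (\<forall>p\<in>P. \<forall>q\<in>P. \<forall>r\<in>P. lt p q \<longrightarrow> lt q r \<longrightarrow> lt p r)"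

definition minimal_elt :: "'a set \<Rightarrow> ('a \<Rightarrow> 'a \<Rightarrow> bool) \<Rightarrow> 'a \<Rightarrow> bool" where
  "minimal_elt P lt p \<longleftrightarrow> p \<in> P \<and> (\<forall>q\<in>P. \<not> lt q p)"

definition maximal_elt :: "'a set \<Rightarrow> ('a \<Rightarrow> 'a \<Rightarrow> bool) \<Rightarrow> 'a \<Rightarrow> bool" where
  "maximal_elt P lt p \<longleftrightarrow> p \<in> P \<and> (\<forall>q\<in>P. \<not> lt p q)"

definition marking :: "'a set \<Rightarrow> ('a \<Rightarrow> 'a \<Rightarrow> bool) \<Rightarrow> ('a \<Rightarrow> int) \<Rightarrow> bool" where
  "marking A lt lam \<longleftrightarrow> (\<forall>a\<in>A. 0 \<le> lam a) \<and> (\<forall>a\<in>A. \<forall>b\<in>A. lt a b \<longrightarrow> lam a \<le> lam b)"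

definition marked_poset :: "'a set \<Rightarrow> ('a \<Rightarrow> 'a \<Rightarrow> bool) \<Rightarrow> 'a set \<Rightarrow> ('a \<Rightarrow> int) \<Rightarrow> bool" where
  "marked_poset P lt A lam \<longleftrightarrow> strict_poset P lt \<and> A \<subseteq> P
     \<and> (\<forall>p. minimal_elt P lt p \<longrightarrow> p \<in> A)
     \<and> (\<forall>p. maximal_elt P lt p \<longrightarrow> p \<in> A)
     \<and> marking A lt lam"

definition admissible_decomp ::
  "'a set \<Rightarrow> ('a \<Rightarrow> 'a \<Rightarrow> bool) \<Rightarrow> 'a set \<Rightarrow> 'a set \<Rightarrow> 'a set \<Rightarrow> bool" where
  "admissible_decomp P lt A U1 U2 \<longleftrightarrow> U1 \<inter> U2 = {} \<and> U1 \<union> U2 = P - A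
     \<and> \<not> (\<exists>u1\<in>U1. \<exists>u2\<in>U2. lt u1 u2)"

definition mval :: "'a set \<Rightarrow> ('a \<Rightarrow> 'b) \<Rightarrow> ('a \<Rightarrow> 'b) \<Rightarrow> 'a \<Rightarrow> 'b" where
  "mval U1 lam x q = (if q \<in> U1 then x q else lam q)"

text \<open>Points of R^(P - A) are functions vanishing outside P - A.
  The marked chain-order polytope (here: real points).\<close>
definition CO :: "'a set \<Rightarrow> ('a \<Rightarrow> 'a \<Rightarrow> bool) \<Rightarrow> 'a set \<Rightarrow> 'a set \<Rightarrow> 'a set
    \<Rightarrow> ('a \<Rightarrow> int) \<Rightarrow> ('a \<Rightarrow> real) set" where
  "CO P lt A U1 U2 lam = {x. (\<forall>p. p \<notin> P - A \<longrightarrow> x p = 0)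
     \<and> (\<forall>p\<in>U1. \<forall>a\<in>A. lt p a \<longrightarrow> x p \<le> of_int (lam a))
     \<and> (\<forall>q\<in>U1. \<forall>b\<in>A. lt b q \<longrightarrow> of_int (lam b) \<le> x q)
     \<and> (\<forall>p\<in>U1. \<forall>q\<in>U1. lt p q \<longrightarrow> x p \<le> x q)
     \<and> (\<forall>p\<in>U2. 0 \<le> x p)
     \<and> (\<forall>a\<in>A \<union> U1. \<forall>b\<in>A \<union> U1. \<forall>ps. ps \<noteq> [] \<longrightarrow> set ps \<subseteq> U2
          \<longrightarrow> sorted_wrt lt (b # ps @ [a])
          \<longrightarrow> sum_list (map x ps) \<le> mval U1 (\<lambda>q. of_int (lam q)) x a - mval U1 (\<lambda>q. of_int (lam q)) x b)
     \<and> (\<forall>q\<in>U1. \<forall>ps. ps \<noteq> [] \<longrightarrow> set ps \<subseteq> U2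
          \<longrightarrow> sorted_wrt lt (ps @ [q])
          \<longrightarrow> sum_list (map x ps) \<le> x q)}"

definition S_CO :: "'a set \<Rightarrow> ('a \<Rightarrow> 'a \<Rightarrow> bool) \<Rightarrow> 'a set \<Rightarrow> 'a set \<Rightarrow> 'a set
    \<Rightarrow> ('a \<Rightarrow> int) \<Rightarrow> ('a \<Rightarrow> int) set" where
  "S_CO P lt A U1 U2 lam = {x. (\<forall>p\<in>P - A. 0 \<le> x p) \<and> (\<lambda>p. real_of_int (x p)) \<in> CO P lt A U1 U2 lam}"

definition minkowski :: "('a \<Rightarrow> int) set \<Rightarrow> ('a \<Rightarrow> int) set \<Rightarrow> ('a \<Rightarrow> int) set" where
  "minkowski X Y = {(\<lambda>p. x p + y p) | x y. x \<in> X \<and> y \<in> Y}"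

end

theory Submission
  imports Defs
begin

text \<open>
  One inclusion is immediate, since every defining inequality is additive in the marking and the
  point together.  For the other, induct on the total mass of \<open>\<mu>\<close>: since \<open>A\<close> is a chain, the
  support \<open>T\<close> of \<open>\<mu>\<close> is an up-set of \<open>A\<close>, so it suffices to split a lattice point \<open>z\<close> for
  \<open>\<nu> = \<lambda> + \<chi>\<^sub>T\<close> into lattice points for \<open>\<lambda>\<close> and for \<open>\<chi>\<^sub>T\<close>.  Let \<open>c\<close> be the least value of \<open>\<nu>\<close>
  on \<open>T\<close>.  The height \<open>H\<close> is given by \<open>\<nu>\<close> and \<open>z\<close> on \<open>A \<union> U\<^sub>1\<close>, and at \<open>p \<in> U\<^sub>2\<close> it is the
  largest value of \<open>H(b) + z(p\<^sub>1) + \<dots> + z(p\<^sub>k)\<close> over chains \<open>b \<prec> p\<^sub>1 \<prec> \<dots> \<prec> p\<^sub>k = p\<close>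
  with \<open>b \<in> A \<union> U\<^sub>1\<close> and all \<open>p\<^sub>i \<in> U\<^sub>2\<close>.  The \<open>\<chi>\<^sub>T\<close>-part \<open>y\<close> is 1 at the points of \<open>U\<^sub>1\<close>
  where \<open>z \<ge> c\<close> and at the points \<open>p \<in> U\<^sub>2\<close> whose interval \<open>(H(p) - z(p), H(p)]\<close> contains
  \<open>c\<close>, and 0 elsewhere.  Along a chain these intervals are disjoint and increasing, so the chain
  inequalities for \<open>y\<close> and for \<open>z - y\<close> follow by telescoping.
\<close>

definition in_S_CO :: "'a set \<Rightarrow> ('a \<Rightarrow> 'a \<Rightarrow> bool) \<Rightarrow> 'a set \<Rightarrow> 'a set \<Rightarrow> 'a set
    \<Rightarrow> ('a \<Rightarrow> int) \<Rightarrow> ('a \<Rightarrow> int) \<Rightarrow> bool" where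
  "in_S_CO P lt A U1 U2 lam x \<longleftrightarrow> (\<forall>p. p \<notin> P - A \<longrightarrow> x p = 0)
     \<and> (\<forall>p\<in>P - A. 0 \<le> x p)
     \<and> (\<forall>p\<in>U1. \<forall>a\<in>A. lt p a \<longrightarrow> x p \<le> lam a)
     \<and> (\<forall>q\<in>U1. \<forall>b\<in>A. lt b q \<longrightarrow> lam b \<le> x q)
     \<and> (\<forall>p\<in>U1. \<forall>q\<in>U1. lt p q \<longrightarrow> x p \<le> x q)
     \<and> (\<forall>a\<in>A \<union> U1. \<forall>b\<in>A \<union> U1. \<forall>ps. ps \<noteq> [] \<longrightarrow> set ps \<subseteq> U2
          \<longrightarrow> sorted_wrt lt (b # ps @ [a])
          \<longrightarrow> sum_list (map x ps) \<le> mval U1 lam x a - mval U1 lam x b)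
     \<and> (\<forall>q\<in>U1. \<forall>ps. ps \<noteq> [] \<longrightarrow> set ps \<subseteq> U2
          \<longrightarrow> sorted_wrt lt (ps @ [q])
          \<longrightarrow> sum_list (map x ps) \<le> x q)"

lemma of_int_sum_list_map:
  "real_of_int (sum_list (map x ps)) = sum_list (map (\<lambda>p. real_of_int (x p)) ps)"
  by (induction ps) auto

lemma mval_of_int:
  "mval U1 (\<lambda>q. real_of_int (lam q)) (\<lambda>p. real_of_int (x p)) a = real_of_int (mval U1 lam x a)"
  by (simp add: mval_def)

lemma mem_S_CO_iff:
  assumes "U2 \<subseteq> P - A"
  shows "x \<in> S_CO P lt A U1 U2 lam \<longleftrightarrow> in_S_CO P lt A U1 U2 lam x"
proof -
  have chain_iff: "sum_list (map (\<lambda>p. real_of_int (x p)) ps)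
        \<le> mval U1 (\<lambda>q. real_of_int (lam q)) (\<lambda>p. real_of_int (x p)) a
          - mval U1 (\<lambda>q. real_of_int (lam q)) (\<lambda>p. real_of_int (x p)) b
     \<longleftrightarrow> sum_list (map x ps) \<le> mval U1 lam x a - mval U1 lam x b" for ps a b
    by (simp only: mval_of_int flip: of_int_sum_list_map of_int_diff) (rule of_int_le_iff)
  have chain_U1_iff: "sum_list (map (\<lambda>p. real_of_int (x p)) ps) \<le> real_of_int (x q)
     \<longleftrightarrow> sum_list (map x ps) \<le> x q" for ps q
    by (simp only: flip: of_int_sum_list_map) (rule of_int_le_iff)
  show ?thesis
    unfolding S_CO_def CO_def in_S_CO_def mem_Collect_eq chain_iff chain_U1_iff
    using assms by (auto simp: subset_iff)
qed

lemma in_S_CO_chainD: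
  assumes "in_S_CO P lt A U1 U2 lam x" "a \<in> A \<union> U1" "b \<in> A \<union> U1" "ps \<noteq> []" "set ps \<subseteq> U2"
    "sorted_wrt lt (b # ps @ [a])"
  shows "sum_list (map x ps) \<le> mval U1 lam x a - mval U1 lam x b"
  using assms unfolding in_S_CO_def by blast

lemma in_S_CO_chain_U1D:
  assumes "in_S_CO P lt A U1 U2 lam x" "q \<in> U1" "ps \<noteq> []" "set ps \<subseteq> U2" "sorted_wrt lt (ps @ [q])"
  shows "sum_list (map x ps) \<le> x q"
  using assms unfolding in_S_CO_def by metis

lemma in_S_CO_cong:
  assumes "\<forall>a\<in>A. lam a = lam' a"
  shows "in_S_CO P lt A U1 U2 lam x = in_S_CO P lt A U1 U2 lam' x"
proof -
  have "\<forall>a\<in>A \<union> U1. mval U1 lam x a = mval U1 lam' x a"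
    using assms by (auto simp: mval_def)
  then show ?thesis unfolding in_S_CO_def using assms by auto
qed

lemma in_S_CO_zero:
  assumes "\<forall>a\<in>A. lam a = 0"
  shows "in_S_CO P lt A U1 U2 lam (\<lambda>p. 0)"
proof -
  have "\<forall>a\<in>A \<union> U1. mval U1 lam (\<lambda>p. 0) a = 0"
    using assms by (auto simp: mval_def)
  then show ?thesis unfolding in_S_CO_def using assms by auto
qed

lemma in_S_CO_add:
  assumes x: "in_S_CO P lt A U1 U2 lam x" and y: "in_S_CO P lt A U1 U2 mu y"
  shows "in_S_CO P lt A U1 U2 (\<lambda>a. lam a + mu a) (\<lambda>p. x p + y p)"
proof -
  have mval_add: "mval U1 (\<lambda>a. lam a + mu a) (\<lambda>p. x p + y p) a
      = mval U1 lam x a + mval U1 mu y a" for a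
    by (simp add: mval_def)
  have "sum_list (map x ps) + sum_list (map y ps)
      \<le> mval U1 lam x a + mval U1 mu y a - (mval U1 lam x b + mval U1 mu y b)"
    if "a \<in> A \<union> U1" "b \<in> A \<union> U1" "ps \<noteq> []" "set ps \<subseteq> U2" "sorted_wrt lt (b # ps @ [a])"
    for a b ps
    using in_S_CO_chainD[OF x that] in_S_CO_chainD[OF y that] by simp
  moreover have "sum_list (map x ps) + sum_list (map y ps) \<le> x q + y q"
    if "q \<in> U1" "ps \<noteq> []" "set ps \<subseteq> U2" "sorted_wrt lt (ps @ [q])" for q ps
    using in_S_CO_chain_U1D[OF x that] in_S_CO_chain_U1D[OF y that] by simp
  moreover note x y
  ultimately show ?thesis
    unfolding in_S_CO_def mval_add sum_list_addf by (simp add: add_mono)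
qed

lemma sum_list_le_telescoping:
  fixes f F :: "'a \<Rightarrow> int"
  assumes "\<And>u v. u \<in> set (b # ps) \<Longrightarrow> v \<in> set ps \<Longrightarrow> R u v \<Longrightarrow> f v \<le> F v - F u"
    and "\<And>u. u \<in> set ps \<Longrightarrow> R u a \<Longrightarrow> F u \<le> F a"
    and "sorted_wrt R (b # ps @ [a])" and "ps \<noteq> []"
  shows "sum_list (map f ps) \<le> F a - F b"
  using assms
proof (induction ps arbitrary: b)
  case Nil
  then show ?case by simp
next
  case (Cons v ps)
  have "f v \<le> F v - F b"
    using Cons.prems(1)[of b v] Cons.prems(3) by simp
  moreover have "sum_list (map f ps) \<le> F a - F v"
  proof (cases "ps = []")
    case True
    then show ?thesis using Cons.prems(2)[of v] Cons.prems(3) by simp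
  next
    case False
    then show ?thesis using Cons.prems by (intro Cons.IH) auto
  qed
  ultimately show ?case by simp
qed

locale decomposed_marked_poset =
  fixes P :: "'a set" and lt :: "'a \<Rightarrow> 'a \<Rightarrow> bool" and A U1 U2 :: "'a set"
  assumes poset: "strict_poset P lt"
    and A_subset: "A \<subseteq> P"
    and minimal_in_A: "\<forall>p. minimal_elt P lt p \<longrightarrow> p \<in> A"
    and U_disjoint: "U1 \<inter> U2 = {}"
    and U_union: "U1 \<union> U2 = P - A"
    and A_chain: "\<forall>a\<in>A. \<forall>b\<in>A. a = b \<or> lt a b \<or> lt b a"
begin

lemma finite_P: "finite P"
  and irrefl: "p \<in> P \<Longrightarrow> \<not> lt p p"
  and trans: "p \<in> P \<Longrightarrow> q \<in> P \<Longrightarrow> r \<in> P \<Longrightarrow> lt p q \<Longrightarrow> lt q r \<Longrightarrow> lt p r"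
  using poset unfolding strict_poset_def by blast+

lemma U1_subset: "U1 \<subseteq> P - A" and U2_subset: "U2 \<subseteq> P - A"
  using U_union by auto

lemma exists_minimal_below:
  assumes "p \<in> P"
  shows "\<exists>m\<in>A. m = p \<or> lt m p"
proof -
  define R where "R = {(q, r). q \<in> P \<and> r \<in> P \<and> lt q r}"
  have "finite R"
    unfolding R_def by (rule finite_subset[of _ "P \<times> P"]) (auto simp: finite_P)
  moreover have "acyclic R"
  proof -
    have "trans R" unfolding R_def Relation.trans_def using trans by blast
    then show ?thesis
      unfolding acyclic_def trancl_id[OF \<open>trans R\<close>] by (auto simp: R_def irrefl)
  qed
  ultimately have "wf R" by (rule finite_acyclic_wf)
  define Q where "Q = {m \<in> P. m = p \<or> lt m p}"
  have "p \<in> Q" unfolding Q_def using assms by simp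
  then obtain m where m: "m \<in> Q" and m_min: "\<And>q. (q, m) \<in> R \<Longrightarrow> q \<notin> Q"
    using wfE_min[OF \<open>wf R\<close>] by blast
  have "minimal_elt P lt m"
    unfolding minimal_elt_def
  proof (intro conjI ballI notI)
    show "m \<in> P" using m Q_def by simp
    fix q assume "q \<in> P" "lt q m"
    then have "(q, m) \<in> R" "q \<in> Q"
      using m assms trans unfolding R_def Q_def by blast+
    then show False using m_min by blast
  qed
  then show ?thesis using minimal_in_A m Q_def by blast
qed

lemma exists_A_below:
  assumes "p \<in> P - A"
  shows "\<exists>m\<in>A. lt m p"
  using exists_minimal_below[of p] assms by auto

lemma sorted_wrt_snoc_trans:
  assumes "sorted_wrt lt (xs @ [q])" "set xs \<subseteq> P" "q \<in> P" "a \<in> P" "lt q a"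
  shows "sorted_wrt lt (xs @ [q, a])"
proof -
  have "\<forall>e\<in>set xs. lt e q" using assms(1) by (simp add: sorted_wrt_append)
  then have "lt e a" if "e \<in> set (xs @ [q])" for e
    using that assms(2-5) trans[of e q a] by auto
  then show ?thesis using assms(1) sorted_wrt_append[of lt "xs @ [q]" "[a]"] by simp
qed

text \<open>The last condition (vi) of the chain-order polytope is implied by the others: prolong
  the chain downwards by an element of \<open>A\<close> and use (v) together with \<open>\<lambda> \<ge> 0\<close>.\<close>

lemma in_S_CO_intro:
  assumes lam_nonneg: "\<forall>a\<in>A. 0 \<le> lam a"
    and "\<forall>p. p \<notin> P - A \<longrightarrow> x p = 0"
    and "\<forall>p\<in>P - A. 0 \<le> x p"
    and "\<forall>p\<in>U1. \<forall>a\<in>A. lt p a \<longrightarrow> x p \<le> lam a"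
    and "\<forall>q\<in>U1. \<forall>b\<in>A. lt b q \<longrightarrow> lam b \<le> x q"
    and "\<forall>p\<in>U1. \<forall>q\<in>U1. lt p q \<longrightarrow> x p \<le> x q"
    and chain: "\<forall>a\<in>A \<union> U1. \<forall>b\<in>A \<union> U1. \<forall>ps. ps \<noteq> [] \<longrightarrow> set ps \<subseteq> U2
          \<longrightarrow> sorted_wrt lt (b # ps @ [a])
          \<longrightarrow> sum_list (map x ps) \<le> mval U1 lam x a - mval U1 lam x b"
  shows "in_S_CO P lt A U1 U2 lam x"
proof -
  have "sum_list (map x ps) \<le> x q"
    if q: "q \<in> U1" and ps: "ps \<noteq> []" "set ps \<subseteq> U2" "sorted_wrt lt (ps @ [q])" for q ps
  proof -
    have hd: "hd ps \<in> U2" using ps by auto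
    then obtain m where m: "m \<in> A" "lt m (hd ps)"
      using exists_A_below U2_subset by blast
    have "\<forall>e\<in>set (ps @ [q]). e = hd ps \<or> lt (hd ps) e"
      using ps(1,3) by (cases ps) auto
    moreover have "set (ps @ [q]) \<subseteq> P" "m \<in> P" "hd ps \<in> P"
      using ps(2) q hd m U1_subset U2_subset A_subset by auto
    ultimately have "\<forall>e\<in>set (ps @ [q]). lt m e"
      using m(2) trans by (metis subsetD)
    then have "sorted_wrt lt (m # ps @ [q])"
      using ps(3) by simp
    then have "sum_list (map x ps) \<le> mval U1 lam x q - mval U1 lam x m"
      using chain q m ps by blast
    moreover have "m \<notin> U1" using m U1_subset by auto
    ultimately show ?thesis
      using q m lam_nonneg by (force simp: mval_def)
  qed
  then show ?thesis unfolding in_S_CO_def using assms by blast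
qed

end

text \<open>In the notation of the proof idea, \<open>threshold\<close> is \<open>c\<close>, \<open>height\<close> is \<open>H\<close> and
  \<open>y_part\<close> is \<open>y\<close>.\<close>

locale up_set_splitting = decomposed_marked_poset +
  fixes lam :: "'a \<Rightarrow> int" and T :: "'a set" and z :: "'a \<Rightarrow> int"
  assumes lam_marking: "marking A lt lam"
    and T_subset: "T \<subseteq> A"
    and T_up: "\<forall>a\<in>T. \<forall>b\<in>A. lt a b \<longrightarrow> b \<in> T"
    and T_nonempty: "T \<noteq> {}"
    and z_in: "in_S_CO P lt A U1 U2 (\<lambda>a. lam a + of_bool (a \<in> T)) z"
begin

lemma lam_nonneg: "\<forall>a\<in>A. 0 \<le> lam a"
  and lam_mono: "\<forall>a\<in>A. \<forall>b\<in>A. lt a b \<longrightarrow> lam a \<le> lam b"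
  using lam_marking unfolding marking_def by blast+

definition nu :: "'a \<Rightarrow> int" where "nu a = lam a + of_bool (a \<in> T)"

definition threshold :: int where "threshold = Min (nu ` T)"

definition chains_to :: "'a \<Rightarrow> ('a \<times> 'a list) set" where
  "chains_to q = {(b, ps). b \<in> A \<union> U1 \<and> set ps \<subseteq> U2 \<and> sorted_wrt lt (b # ps @ [q])}"

definition chain_weight :: "'a \<times> 'a list \<Rightarrow> int" where
  "chain_weight bp = mval U1 nu z (fst bp) + sum_list (map z (snd bp))"

definition height :: "'a \<Rightarrow> int" where
  "height q = (if q \<in> A \<union> U1 then mval U1 nu z q else Max (chain_weight ` chains_to q) + z q)"

definition level :: "'a \<Rightarrow> int" where "level q = of_bool (threshold \<le> height q)"

definition y_part :: "'a \<Rightarrow> int" where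
  "y_part p = (if p \<in> U1 then of_bool (threshold \<le> z p)
     else if p \<in> U2 then of_bool (height p - z p < threshold \<and> threshold \<le> height p) else 0)"

definition x_part :: "'a \<Rightarrow> int" where "x_part p = z p - y_part p"

lemma z_in_nu: "in_S_CO P lt A U1 U2 nu z"
  using z_in unfolding nu_def .

lemma z_support: "p \<notin> P - A \<Longrightarrow> z p = 0"
  using z_in_nu by (simp add: in_S_CO_def)

lemma z_nonneg: "p \<in> P - A \<Longrightarrow> 0 \<le> z p"
  using z_in_nu by (simp add: in_S_CO_def)

lemma z_le_A: "p \<in> U1 \<Longrightarrow> a \<in> A \<Longrightarrow> lt p a \<Longrightarrow> z p \<le> nu a"
  using z_in_nu by (simp add: in_S_CO_def)

lemma z_ge_A: "q \<in> U1 \<Longrightarrow> b \<in> A \<Longrightarrow> lt b q \<Longrightarrow> nu b \<le> z q"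
  using z_in_nu by (simp add: in_S_CO_def)

lemma z_mono_U1: "p \<in> U1 \<Longrightarrow> q \<in> U1 \<Longrightarrow> lt p q \<Longrightarrow> z p \<le> z q"
  using z_in_nu by (simp add: in_S_CO_def)

lemmas z_chain = in_S_CO_chainD[OF z_in_nu]

lemma finite_T: "finite T"
  using finite_subset[OF subset_trans[OF T_subset A_subset] finite_P] .

lemma threshold_attained: "threshold \<in> nu ` T"
  unfolding threshold_def using finite_T T_nonempty by simp

lemma threshold_le_nu_iff:
  assumes "a \<in> A"
  shows "threshold \<le> nu a \<longleftrightarrow> a \<in> T"
proof
  obtain t where t: "t \<in> T" "threshold = nu t" using threshold_attained by blast
  assume "threshold \<le> nu a"
  show "a \<in> T"
  proof (rule ccontr)
    assume "a \<notin> T"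
    moreover have "t \<in> A" using t(1) T_subset by blast
    ultimately have "lt a t"
      using A_chain T_up assms t(1) by metis
    then have "lam a \<le> lam t"
      using lam_mono assms \<open>t \<in> A\<close> by blast
    then show False
      using t \<open>a \<notin> T\<close> \<open>threshold \<le> nu a\<close> by (simp add: nu_def)
  qed
qed (simp add: threshold_def finite_T)

lemma threshold_pos: "1 \<le> threshold"
  using threshold_attained T_subset lam_nonneg by (auto simp: nu_def)

lemma finite_chains_to: "finite (chains_to q)"
proof -
  let ?L = "{ps. set ps \<subseteq> P \<and> length ps \<le> card P}"
  have "chains_to q \<subseteq> (A \<union> U1) \<times> ?L"
  proof safe
    fix b ps assume "(b, ps) \<in> chains_to q"
    then have ps: "set ps \<subseteq> P" "sorted_wrt lt ps"
      unfolding chains_to_def using U2_subset by (auto simp: sorted_wrt_append)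
    then have "distinct ps"
      using irrefl by (induction ps) auto
    then show "length ps \<le> card P"
      using ps(1) finite_P by (metis card_mono distinct_card)
  qed (use U2_subset in \<open>auto simp: chains_to_def\<close>)
  moreover have "finite ((A \<union> U1) \<times> ?L)"
    using finite_P A_subset U1_subset finite_subset finite_lists_length_le[OF finite_P]
    by (intro finite_cartesian_product) auto
  ultimately show ?thesis using finite_subset by blast
qed

lemma height_U2: "q \<in> U2 \<Longrightarrow> height q = Max (chain_weight ` chains_to q) + z q"
  using U_disjoint U2_subset by (auto simp: height_def)

lemma chain_weight_le_height:
  assumes "q \<in> U2" "bp \<in> chains_to q"
  shows "chain_weight bp + z q \<le> height q"
  using assms finite_chains_to by (simp add: height_U2)

lemma height_attained:
  assumes "q \<in> U2"
  obtains b ps where "(b, ps) \<in> chains_to q" "height q = chain_weight (b, ps) + z q"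
proof -
  obtain m where "m \<in> A" "lt m q"
    using exists_A_below assms U2_subset by blast
  then have "(m, []) \<in> chains_to q" unfolding chains_to_def by auto
  then have "Max (chain_weight ` chains_to q) \<in> chain_weight ` chains_to q"
    using finite_chains_to by (intro Max_in) auto
  then show ?thesis using that height_U2[OF assms] by auto
qed

lemma chains_to_elems:
  assumes "(b, ps) \<in> chains_to q"
  shows "b \<in> A \<union> U1" "set ps \<subseteq> U2" "set (b # ps) \<subseteq> P" "sorted_wrt lt ((b # ps) @ [q])"
  using assms A_subset U1_subset U2_subset unfolding chains_to_def by auto

text \<open>Heights increase along a chain by at least \<open>z\<close> at the points of \<open>U\<^sub>2\<close>, and do not decrease
  when a chain from \<open>U\<^sub>2\<close> enters \<open>A \<union> U\<^sub>1\<close>; the latter is condition (v) for \<open>z\<close>.\<close>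

lemma height_step_U2:
  assumes v: "v \<in> U2" and u: "u \<in> P" and "lt u v"
  shows "height u + z v \<le> height v"
proof (cases "u \<in> A \<union> U1")
  case True
  then have "(u, []) \<in> chains_to v" unfolding chains_to_def using \<open>lt u v\<close> by simp
  then have "chain_weight (u, []) + z v \<le> height v" by (rule chain_weight_le_height[OF v])
  then show ?thesis using True by (simp add: chain_weight_def height_def)
next
  case False
  then have u_U2: "u \<in> U2" using u U_union by auto
  obtain b ps where bp: "(b, ps) \<in> chains_to u" "height u = chain_weight (b, ps) + z u"
    using height_attained[OF u_U2] by blast
  have "sorted_wrt lt ((b # ps) @ [u, v])"
    using chains_to_elems[OF bp(1)] u v U2_subset \<open>lt u v\<close>
    by (intro sorted_wrt_snoc_trans) auto
  then have "(b, ps @ [u]) \<in> chains_to v"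
    using chains_to_elems(1,2)[OF bp(1)] u_U2 unfolding chains_to_def by simp
  then have "chain_weight (b, ps @ [u]) + z v \<le> height v" by (rule chain_weight_le_height[OF v])
  then show ?thesis using bp(2) by (simp add: chain_weight_def)
qed

lemma height_step_A1:
  assumes v: "v \<in> U2" and a: "a \<in> A \<union> U1" and "lt v a"
  shows "height v \<le> height a"
proof -
  obtain b ps where bp: "(b, ps) \<in> chains_to v" "height v = chain_weight (b, ps) + z v"
    using height_attained[OF v] by blast
  have "sorted_wrt lt ((b # ps) @ [v, a])"
    using chains_to_elems[OF bp(1)] a v A_subset U1_subset U2_subset \<open>lt v a\<close>
    by (intro sorted_wrt_snoc_trans) auto
  then have "sum_list (map z (ps @ [v])) \<le> mval U1 nu z a - mval U1 nu z b"
    using chains_to_elems(1,2)[OF bp(1)] v a by (intro z_chain) auto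
  then show ?thesis using bp(2) a by (simp add: chain_weight_def height_def)
qed

lemma y_part_U2:
  "v \<in> U2 \<Longrightarrow> y_part v = of_bool (height v - z v < threshold \<and> threshold \<le> height v)"
  using U_disjoint by (auto simp: y_part_def)

lemma level_A1: "a \<in> A \<union> U1 \<Longrightarrow> level a = mval U1 (\<lambda>a. of_bool (a \<in> T)) y_part a"
  using threshold_le_nu_iff U1_subset
  by (auto simp: level_def height_def mval_def y_part_def)

lemma height_minus_level_A1: "a \<in> A \<union> U1 \<Longrightarrow> height a - level a = mval U1 lam x_part a"
  using threshold_le_nu_iff[of a] U1_subset
  by (auto simp: level_def height_def mval_def y_part_def x_part_def nu_def)

lemma chain_sum_le:
  fixes f F :: "'a \<Rightarrow> int"
  assumes step_U2: "\<And>u v. u \<in> P \<Longrightarrow> v \<in> U2 \<Longrightarrow> height u + z v \<le> height v \<Longrightarrow> f v \<le> F v - F u"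
    and step_A1: "\<And>u a. height u \<le> height a \<Longrightarrow> F u \<le> F a"
    and "a \<in> A \<union> U1" "b \<in> A \<union> U1" "ps \<noteq> []" "set ps \<subseteq> U2"
    and "sorted_wrt lt (b # ps @ [a])"
  shows "sum_list (map f ps) \<le> F a - F b"
proof (rule sum_list_le_telescoping[where R = lt])
  fix u v assume "u \<in> set (b # ps)" "v \<in> set ps" "lt u v"
  moreover have "set (b # ps) \<subseteq> P" using assms A_subset U1_subset U2_subset by auto
  ultimately show "f v \<le> F v - F u"
    using step_U2 height_step_U2 assms(6) by blast
qed (use assms height_step_A1 in auto)

lemma y_part_in: "in_S_CO P lt A U1 U2 (\<lambda>a. of_bool (a \<in> T)) y_part"
proof (rule in_S_CO_intro)
  show "\<forall>p. p \<notin> P - A \<longrightarrow> y_part p = 0" using U1_subset U2_subset by (auto simp: y_part_def)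
  show "\<forall>p\<in>U1. \<forall>a\<in>A. lt p a \<longrightarrow> y_part p \<le> of_bool (a \<in> T)"
    using z_le_A threshold_le_nu_iff by (fastforce simp: y_part_def)
  show "\<forall>q\<in>U1. \<forall>b\<in>A. lt b q \<longrightarrow> of_bool (b \<in> T) \<le> y_part q"
    using z_ge_A threshold_le_nu_iff by (fastforce simp: y_part_def)
  show "\<forall>p\<in>U1. \<forall>q\<in>U1. lt p q \<longrightarrow> y_part p \<le> y_part q"
    using z_mono_U1 by (fastforce simp: y_part_def)
  show "\<forall>a\<in>A \<union> U1. \<forall>b\<in>A \<union> U1. \<forall>ps. ps \<noteq> [] \<longrightarrow> set ps \<subseteq> U2
      \<longrightarrow> sorted_wrt lt (b # ps @ [a])
      \<longrightarrow> sum_list (map y_part ps) \<le> mval U1 (\<lambda>a. of_bool (a \<in> T)) y_part a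
          - mval U1 (\<lambda>a. of_bool (a \<in> T)) y_part b"
  proof (intro ballI allI impI)
    fix a b ps assume ab: "a \<in> A \<union> U1" "b \<in> A \<union> U1"
      and ps: "ps \<noteq> []" "set ps \<subseteq> U2" "sorted_wrt lt (b # ps @ [a])"
    have "sum_list (map y_part ps) \<le> level a - level b"
      using ab ps z_nonneg U2_subset
      by (intro chain_sum_le) (force simp: level_def y_part_U2)+
    then show "sum_list (map y_part ps) \<le> mval U1 (\<lambda>a. of_bool (a \<in> T)) y_part a
        - mval U1 (\<lambda>a. of_bool (a \<in> T)) y_part b"
      using ab level_A1 by simp
  qed
qed (auto simp: y_part_def)

lemma x_part_in: "in_S_CO P lt A U1 U2 lam x_part"
proof (rule in_S_CO_intro)
  show "\<forall>a\<in>A. 0 \<le> lam a" using lam_nonneg .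
  show "\<forall>p. p \<notin> P - A \<longrightarrow> x_part p = 0"
    using U1_subset U2_subset z_support by (auto simp: y_part_def x_part_def)
  show "\<forall>p\<in>P - A. 0 \<le> x_part p"
    using z_nonneg threshold_pos U_union y_part_U2 by (fastforce simp: x_part_def y_part_def)
  show "\<forall>p\<in>U1. \<forall>a\<in>A. lt p a \<longrightarrow> x_part p \<le> lam a"
    using z_le_A threshold_le_nu_iff by (fastforce simp: x_part_def y_part_def nu_def)
  show "\<forall>q\<in>U1. \<forall>b\<in>A. lt b q \<longrightarrow> lam b \<le> x_part q"
    using z_ge_A threshold_le_nu_iff by (fastforce simp: x_part_def y_part_def nu_def)
  show "\<forall>p\<in>U1. \<forall>q\<in>U1. lt p q \<longrightarrow> x_part p \<le> x_part q"
    using z_mono_U1 by (fastforce simp: x_part_def y_part_def)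
  show "\<forall>a\<in>A \<union> U1. \<forall>b\<in>A \<union> U1. \<forall>ps. ps \<noteq> [] \<longrightarrow> set ps \<subseteq> U2
      \<longrightarrow> sorted_wrt lt (b # ps @ [a])
      \<longrightarrow> sum_list (map x_part ps) \<le> mval U1 lam x_part a - mval U1 lam x_part b"
  proof (intro ballI allI impI)
    fix a b ps assume ab: "a \<in> A \<union> U1" "b \<in> A \<union> U1"
      and ps: "ps \<noteq> []" "set ps \<subseteq> U2" "sorted_wrt lt (b # ps @ [a])"
    have "sum_list (map x_part ps) \<le> (height a - level a) - (height b - level b)"
      using ab ps z_nonneg U2_subset
      by (intro chain_sum_le[where F = "\<lambda>q. height q - level q"])
        (force simp: level_def x_part_def y_part_U2)+
    then show "sum_list (map x_part ps) \<le> mval U1 lam x_part a - mval U1 lam x_part b"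
      using ab height_minus_level_A1 by simp
  qed
qed

lemma split_up_set:
  "\<exists>x y. in_S_CO P lt A U1 U2 lam x \<and> in_S_CO P lt A U1 U2 (\<lambda>a. of_bool (a \<in> T)) y
     \<and> z = (\<lambda>p. x p + y p)"
  using x_part_in y_part_in by (intro exI[of _ x_part] exI[of _ y_part]) (auto simp: x_part_def)

end

context decomposed_marked_poset
begin

lemma in_S_CO_split_up_set:
  assumes "marking A lt lam" "T \<subseteq> A" "T \<noteq> {}" "\<forall>a\<in>T. \<forall>b\<in>A. lt a b \<longrightarrow> b \<in> T"
    and "in_S_CO P lt A U1 U2 (\<lambda>a. lam a + of_bool (a \<in> T)) z"
  shows "\<exists>x y. in_S_CO P lt A U1 U2 lam x \<and> in_S_CO P lt A U1 U2 (\<lambda>a. of_bool (a \<in> T)) y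
     \<and> z = (\<lambda>p. x p + y p)"
  using assms by (intro up_set_splitting.split_up_set) unfold_locales

lemma marking_minus_support:
  assumes "marking A lt mu"
  shows "marking A lt (\<lambda>a. mu a - of_bool (a \<in> A \<and> 0 < mu a))"
    and "\<forall>a\<in>{a \<in> A. 0 < mu a}. \<forall>b\<in>A. lt a b \<longrightarrow> b \<in> {a \<in> A. 0 < mu a}"
  using assms by (fastforce simp: marking_def)+

lemma in_S_CO_split:
  assumes "marking A lt lam" "marking A lt mu"
    and "in_S_CO P lt A U1 U2 (\<lambda>a. lam a + mu a) z"
  shows "\<exists>x y. in_S_CO P lt A U1 U2 lam x \<and> in_S_CO P lt A U1 U2 mu y \<and> z = (\<lambda>p. x p + y p)"
  using assms
proof (induction "\<Sum>a\<in>A. nat (mu a)" arbitrary: lam mu z rule: less_induct)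
  case less
  show ?case
  proof (cases "\<forall>a\<in>A. mu a = 0")
    case True
    then have "in_S_CO P lt A U1 U2 lam z" "in_S_CO P lt A U1 U2 mu (\<lambda>p. 0)"
      using less.prems(3) in_S_CO_cong[where lam = "\<lambda>a. lam a + mu a" and lam' = lam] in_S_CO_zero
      by auto
    then show ?thesis by force
  next
    case False
    define T where "T = {a \<in> A. 0 < mu a}"
    define mu' where "mu' = (\<lambda>a. mu a - of_bool (a \<in> T))"
    have mu_nonneg: "\<forall>a\<in>A. 0 \<le> mu a" using less.prems(2) by (simp add: marking_def)
    have mu': "marking A lt mu'" and T_up: "\<forall>a\<in>T. \<forall>b\<in>A. lt a b \<longrightarrow> b \<in> T"
      using marking_minus_support[OF less.prems(2)] by (simp_all add: mu'_def T_def)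
    have "marking A lt (\<lambda>a. lam a + mu' a)"
      using less.prems(1) mu' by (auto simp: marking_def add_mono)
    moreover have "T \<subseteq> A" "T \<noteq> {}" using False mu_nonneg by (force simp: T_def)+
    moreover note T_up
    moreover have "in_S_CO P lt A U1 U2 (\<lambda>a. lam a + mu' a + of_bool (a \<in> T)) z"
      using less.prems(3) by (simp add: mu'_def)
    ultimately have "\<exists>z' y1. in_S_CO P lt A U1 U2 (\<lambda>a. lam a + mu' a) z'
        \<and> in_S_CO P lt A U1 U2 (\<lambda>a. of_bool (a \<in> T)) y1 \<and> z = (\<lambda>p. z' p + y1 p)"
      by (rule in_S_CO_split_up_set)
    then obtain z' y1 where z': "in_S_CO P lt A U1 U2 (\<lambda>a. lam a + mu' a) z'"
      and y1: "in_S_CO P lt A U1 U2 (\<lambda>a. of_bool (a \<in> T)) y1" and z: "z = (\<lambda>p. z' p + y1 p)"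
      by blast
    have "(\<Sum>a\<in>A. nat (mu' a)) < (\<Sum>a\<in>A. nat (mu a))"
    proof (rule sum_strict_mono_ex1)
      show "finite A" using finite_subset[OF A_subset finite_P] .
      show "\<forall>a\<in>A. nat (mu' a) \<le> nat (mu a)" by (auto simp: mu'_def)
      show "\<exists>a\<in>A. nat (mu' a) < nat (mu a)"
        using False mu_nonneg by (force simp: mu'_def T_def)
    qed
    then obtain x y2 where x: "in_S_CO P lt A U1 U2 lam x"
      and y2: "in_S_CO P lt A U1 U2 mu' y2" and z': "z' = (\<lambda>p. x p + y2 p)"
      using less.hyps less.prems(1) mu' z' by blast
    have "in_S_CO P lt A U1 U2 mu (\<lambda>p. y2 p + y1 p)"
      using in_S_CO_add[OF y2 y1] in_S_CO_cong[where lam = "\<lambda>a. mu' a + of_bool (a \<in> T)" and lam' = mu]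
      by (simp add: mu'_def)
    moreover have "z = (\<lambda>p. x p + (y2 p + y1 p))" using z z' by (simp add: add.assoc)
    ultimately show ?thesis using x by blast
  qed
qed

end

theorem theorem2p5:
  fixes P A U1 U2 :: "'a set" and lt :: "'a \<Rightarrow> 'a \<Rightarrow> bool"
    and lam mu :: "'a \<Rightarrow> int"
  assumes "marked_poset P lt A lam"
    and "marking A lt mu"
    and "\<forall>a\<in>A. \<forall>b\<in>A. a = b \<or> lt a b \<or> lt b a"
    and "admissible_decomp P lt A U1 U2"
  shows "minkowski (S_CO P lt A U1 U2 lam) (S_CO P lt A U1 U2 mu)
         = S_CO P lt A U1 U2 (\<lambda>a. lam a + mu a)"
proof -
  interpret decomposed_marked_poset P lt A U1 U2
    using assms(1,3,4) by unfold_locales (auto simp: marked_poset_def admissible_decomp_def)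
  have lam: "marking A lt lam" using assms(1) by (simp add: marked_poset_def)
  show ?thesis
    unfolding minkowski_def set_eq_iff mem_S_CO_iff[OF U2_subset] mem_Collect_eq
    using in_S_CO_add in_S_CO_split[OF lam assms(2)] by blast
qed

end
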